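(* For fixed $\theta\in[0,\pi]$, let $\mathcal{E}(\theta)$ be the qubit ensemble of pure states $\cos(\theta/2)|0\rangle+s\sin(\theta/2)e^{i\varphi}|1\rangle$, where the sign $s\in\{+1,-1\}$ is chosen with probability $1/2$ each and $\varphi$ is uniformly distributed on $[0,2\pi)$. Then $$J(\mathcal{E}(\theta))=\begin{cases}1-\tfrac12\sin^2\theta, & 0\le\sin\theta\le\sqrt{2/3},\\[2pt] \tfrac12+\tfrac14\sin^2\theta, & \sqrt{2/3}<\sin\theta\le1.\end{cases}$$ In particular the minimum of $J(\mathcal{E}(\theta))$ over $\theta$ is $2/3$, attained when $\sin\theta=\sqrt{2/3}$, and $J(\mathcal{E}(\pi/2))=3/4$.
   Context: Fidelity: $F(\rho,\sigma)=\big(\mathrm{tr}\sqrt{\rho^{1/2}\sigma\rho^{1/2}}\big)^2$. For an orthonormal basis $\{|j\rangle\}$ of $\mathbb{C}^2$ and state $\rho$, $\rho'=\sum_j\langle j|\rho|j\rangle|j\rangle\langle j|$. The ECCC of an ensemble given by a probability measure $\mu$ on states is $J=\max_{\{|j\rangle\}}\int F(\rho,\rho')\,d\mu(\rho)$, maximum over all orthonormal bases of $\mathbb{C}^2$. *)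

theory Defs
  imports "HOL-Analysis.Analysis" "HOL-Probability.Probability"
begin

type_synonym qvec = "complex ^ 2"
type_synonym qmat = "complex ^ 2 ^ 2"

definition mtrace :: "qmat \<Rightarrow> complex" where
  "mtrace A = (\<Sum>i\<in>UNIV. A $ i $ i)"

definition psd :: "qmat \<Rightarrow> bool" where
  "psd A \<longleftrightarrow> (\<forall>v::qvec. let q = (\<Sum>i\<in>UNIV. cnj (v $ i) * (A *v v) $ i) in Im q = 0 \<and> Re q \<ge> 0)"

definition msqrt :: "qmat \<Rightarrow> qmat" where
  "msqrt A = (THE X. psd X \<and> X ** X = A)"

definition fidelity :: "qmat \<Rightarrow> qmat \<Rightarrow> real" where
  "fidelity \<rho> \<sigma> = (Re (mtrace (msqrt (msqrt \<rho> ** \<sigma> ** msqrt \<rho>)))) ^ 2"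

definition proj :: "qvec \<Rightarrow> qmat" where
  "proj u = (\<chi> i j. u $ i * cnj (u $ j))"

definition onb :: "(2 \<Rightarrow> qvec) \<Rightarrow> bool" where
  "onb b \<longleftrightarrow> (\<forall>j k. (\<Sum>i\<in>UNIV. cnj (b j $ i) * b k $ i) = (if j = k then 1 else 0))"

definition braket :: "qvec \<Rightarrow> qmat \<Rightarrow> qvec \<Rightarrow> complex" where
  "braket u A w = (\<Sum>i\<in>UNIV. cnj (u $ i) * (A *v w) $ i)"

definition dephase :: "(2 \<Rightarrow> qvec) \<Rightarrow> qmat \<Rightarrow> qmat" where
  "dephase b \<rho> = (\<chi> a c. \<Sum>j\<in>UNIV. braket (b j) \<rho> (b j) * proj (b j) $ a $ c)"

definition ECCC :: "qmat measure \<Rightarrow> real" where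
  "ECCC \<mu> = (SUP b\<in>{b. onb b}. \<integral>\<rho>. fidelity \<rho> (dephase b \<rho>) \<partial>\<mu>)"

definition psi :: "real \<Rightarrow> real \<Rightarrow> real \<Rightarrow> qvec" where
  "psi \<theta> s \<phi> = (\<chi> i. if i = 0 then complex_of_real (cos (\<theta>/2))
                      else complex_of_real (s * sin (\<theta>/2)) * cis \<phi>)"

definition ens :: "real \<Rightarrow> qmat measure" where
  "ens \<theta> = distr (measure_pmf (pmf_of_set {1, -1::real}) \<Otimes>\<^sub>M uniform_measure lborel {0..<2*pi})
                  borel (\<lambda>(s, \<phi>). proj (psi \<theta> s \<phi>))"

end

theory Submission
  imports Defs
begin

(* For a unit vector psi and an orthonormal basis b, the fidelity of |psi><psi| with its dephasing
   in b equals p_1^2 + p_2^2, where p_j = |<b_j|psi>|^2 and p_1 + p_2 = 1: the square root of a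
   multiple of a rank-one projector is again such a multiple.  For the ensemble states
   psi(theta, s, phi), p_1 is a first harmonic in phi, so the fidelity is a trigonometric
   polynomial of degree 2 in phi; averaging over the uniform phase keeps only its constant term
   avg_fid theta x y, where x + y = 1 are the squared moduli of the components of b_1.  Writing
   t = 4xy in [0, 1], avg_fid is the convex combination (1 - t)(1 - sin^2/2) + t(1/2 + sin^2/4),
   so the supremum over bases is the larger endpoint value, attained by the computational and
   Hadamard bases. *)

lemma qmat_eq_iff:
  "(A::'a^2^2) = B \<longleftrightarrow> A$1$1 = B$1$1 \<and> A$1$2 = B$1$2 \<and> A$2$1 = B$2$1 \<and> A$2$2 = B$2$2"
  by (simp add: vec_eq_iff forall_2)

lemma mat_mult_2_nth: "((A::'a::semiring_1^2^2) ** B) $ i $ j = A$i$1 * B$1$j + A$i$2 * B$2$j"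
  by (simp add: matrix_matrix_mult_def sum_2)

lemma complex_scaleR: "r *\<^sub>R (z::complex) = of_real r * z"
  by (simp add: scaleR_conv_of_real)

definition vec2 :: "complex \<Rightarrow> complex \<Rightarrow> qvec" where
  "vec2 a b = (\<chi> i. if i = 1 then a else b)"

lemma vec2_nth [simp]: "vec2 a b $ 1 = a" "vec2 a b $ 2 = b"
  by (simp_all add: vec2_def)

definition quad_form :: "qmat \<Rightarrow> complex \<Rightarrow> complex \<Rightarrow> complex" where
  "quad_form A a b = cnj a * (A$1$1 * a + A$1$2 * b) + cnj b * (A$2$1 * a + A$2$2 * b)"

lemma psd_quad_form:
  assumes "psd A"
  shows "Im (quad_form A a b) = 0" "Re (quad_form A a b) \<ge> 0"
proof -
  have "(\<Sum>i\<in>UNIV. cnj (vec2 a b $ i) * (A *v vec2 a b) $ i) = quad_form A a b"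
    by (simp add: sum_2 matrix_vector_mult_def quad_form_def)
  then show "Im (quad_form A a b) = 0" "Re (quad_form A a b) \<ge> 0"
    using assms unfolding psd_def Let_def by metis+
qed

lemma psd_entries:
  assumes "psd A"
  shows "Im (A$1$1) = 0" "Re (A$1$1) \<ge> 0" "Im (A$2$2) = 0" "Re (A$2$2) \<ge> 0"
        "A$2$1 = cnj (A$1$2)" "Re (A$1$1) * Re (A$2$2) \<ge> (cmod (A$1$2))^2"
proof -
  define p q w r where "p = A$1$1" and "q = A$1$2" and "w = A$2$1" and "r = A$2$2"
  note Q = psd_quad_form[OF assms] and qf = quad_form_def[of A, folded p_def q_def w_def r_def]
  have p: "Im p = 0" "Re p \<ge> 0" using Q[of 1 0] by (simp_all add: qf)
  have r: "Im r = 0" "Re r \<ge> 0" using Q[of 0 1] by (simp_all add: qf)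
  have "Im q + Im w = 0" using Q[of 1 1] p r by (simp add: qf)
  moreover have "Re q - Re w = 0" using Q[of 1 \<i>] p r by (simp add: qf algebra_simps)
  ultimately have w: "w = cnj q" by (simp add: complex_eq_iff)
  have q2: "(cmod q)^2 = (Re q)^2 + (Im q)^2" by (simp add: cmod_def)
  text \<open>The test vectors (-q, p) and (r, -w) are annihilated by the first resp. second row of A;
    the vector (1, -w) settles the case of a vanishing diagonal.\<close>
  have "Re p * (Re p * Re r - (cmod q)^2) \<ge> 0"
    using Q(2)[of "-q" p] p r w q2 by (simp add: qf algebra_simps power2_eq_square)
  moreover have "Re r * (Re p * Re r - (cmod q)^2) \<ge> 0"
    using Q(2)[of r "-w"] p r w q2 by (simp add: qf algebra_simps power2_eq_square)
  moreover have "Re p = 0 \<Longrightarrow> Re r = 0 \<Longrightarrow> (cmod q)^2 \<le> 0"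
    using Q(2)[of 1 "-w"] p r w q2 by (simp add: qf algebra_simps power2_eq_square)
  ultimately have "Re p * Re r \<ge> (cmod q)^2"
    using p r by (smt (verit) zero_le_mult_iff)
  then show "Im (A$1$1) = 0" "Re (A$1$1) \<ge> 0" "Im (A$2$2) = 0" "Re (A$2$2) \<ge> 0"
        "A$2$1 = cnj (A$1$2)" "Re (A$1$1) * Re (A$2$2) \<ge> (cmod (A$1$2))^2"
    using p r w by (simp_all add: p_def q_def w_def r_def)
qed

(* Closed formula for the square root of a 2x2 positive semidefinite matrix:
   sqrt A = (A + sqrt(det A) I) / sqrt(tr A + 2 sqrt(det A)). *)
definition det2 :: "qmat \<Rightarrow> complex" where
  "det2 A = A$1$1 * A$2$2 - A$1$2 * A$2$1"

definition sqrt_det :: "qmat \<Rightarrow> real" where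
  "sqrt_det A = sqrt (Re (det2 A))"

definition root2 :: "qmat \<Rightarrow> qmat" where
  "root2 A = inverse (sqrt (Re (mtrace A) + 2 * sqrt_det A)) *\<^sub>R (A + sqrt_det A *\<^sub>R mat 1)"

(* Writing X = [[a, q], [cnj q, d]] and delta = det X = a d - |q|^2 >= 0, one has det A = delta^2,
   tr A + 2 delta = (a + d)^2 and, by Cayley--Hamilton, A + delta I = (a + d) X. *)
lemma psd_root_unique:
  assumes X: "psd X" and XA: "X ** X = A"
  shows "X = root2 A"
proof -
  note P = psd_entries[OF X]
  define a d q where "a = Re (X$1$1)" and "d = Re (X$2$2)" and "q = X$1$2"
  define \<delta> where "\<delta> = a * d - (cmod q)^2"
  have X11: "X$1$1 = of_real a" and X22: "X$2$2 = of_real d" and X21: "X$2$1 = cnj q"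
    using P by (simp_all add: a_def d_def q_def complex_eq_iff)
  have nonneg: "a \<ge> 0" "d \<ge> 0" "\<delta> \<ge> 0"
    using P by (simp_all add: a_def d_def q_def \<delta>_def)
  have qq: "q * cnj q = of_real ((cmod q)^2)" "cnj q * q = of_real ((cmod q)^2)"
    using complex_norm_square[of q] by (simp_all add: mult.commute)
  have AX: "A$i$j = X$i$1 * X$1$j + X$i$2 * X$2$j" for i j
    using XA by (auto simp: mat_mult_2_nth)
  have A11: "A$1$1 = of_real (a^2 + (cmod q)^2)" and A22: "A$2$2 = of_real (d^2 + (cmod q)^2)"
    and A12: "A$1$2 = of_real (a + d) * q" and A21: "A$2$1 = of_real (a + d) * cnj q"
    unfolding AX X11 X22 X21 q_def[symmetric] using qq
    by (simp_all add: power2_eq_square algebra_simps)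
  have "Re (det2 A) = (a^2 + (cmod q)^2) * (d^2 + (cmod q)^2) - (a + d)^2 * (cmod q)^2"
    unfolding det2_def A11 A12 A21 A22 using qq
    by (simp add: power2_eq_square mult.assoc mult.left_commute[of q])
  also have "\<dots> = \<delta>^2"
    by (simp add: \<delta>_def power2_eq_square algebra_simps)
  finally have det: "sqrt_det A = \<delta>"
    using nonneg by (simp add: sqrt_det_def)
  have "Re (mtrace A) + 2 * sqrt_det A = (a + d)^2"
    by (simp add: mtrace_def sum_2 A11 A22 det \<delta>_def power2_eq_square algebra_simps)
  then have tr: "sqrt (Re (mtrace A) + 2 * sqrt_det A) = a + d"
    using nonneg by simp
  text \<open>Cayley--Hamilton for the Hermitian matrix X: X^2 + det X = tr X * X.\<close>
  have CH: "A + \<delta> *\<^sub>R mat 1 = (a + d) *\<^sub>R X"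
    unfolding qmat_eq_iff
    by (simp add: mat_def A11 A12 A21 A22 X11 X22 X21 q_def[symmetric] \<delta>_def
        complex_scaleR power2_eq_square algebra_simps)
  show ?thesis
  proof (cases "a + d = 0")
    case True
    then have "a = 0" "d = 0" using nonneg by auto
    then have "q = 0" using nonneg by (simp add: \<delta>_def)
    then show ?thesis
      using \<open>a = 0\<close> \<open>d = 0\<close> True by (simp add: root2_def tr qmat_eq_iff X11 X22 X21 q_def)
  next
    case False
    then show ?thesis
      unfolding root2_def tr unfolding det CH by simp
  qed
qed

lemma msqrt_eqI:
  assumes "psd X" "X ** X = A"
  shows "msqrt A = X"
  unfolding msqrt_def
proof (rule the_equality)
  show "psd X \<and> X ** X = A" using assms by simp
next
  fix Y assume "psd Y \<and> Y ** Y = A"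
  then show "Y = X" using psd_root_unique assms by metis
qed

(* Measurability of msqrt: it agrees with the Borel function root2 on the Borel set
   of matrices having a PSD square root and is constant elsewhere. *)
lemma psd_closed: "closed {A::qmat. psd A}"
proof -
  have "{A::qmat. psd A} = (\<Inter>v. {A. Im (\<Sum>i\<in>UNIV. cnj (v$i) * (A *v v)$i) = 0}
                                \<inter> {A. 0 \<le> Re (\<Sum>i\<in>UNIV. cnj (v$i) * (A *v v)$i)})"
    by (auto simp: psd_def Let_def)
  also have "closed \<dots>"
    by (intro closed_INT ballI closed_Int closed_Collect_eq closed_Collect_le)
       (simp_all add: matrix_vector_mult_def, (intro continuous_intros)+)
  finally show ?thesis .
qed

lemma root2_measurable [measurable]: "root2 \<in> borel_measurable borel"
proof -
  have [measurable]: "sqrt_det \<in> borel_measurable borel" "mtrace \<in> borel_measurable borel"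
    unfolding sqrt_det_def[abs_def] det2_def mtrace_def
    by (intro borel_measurable_continuous_onI continuous_intros)+
  show ?thesis unfolding root2_def[abs_def] by measurable
qed

(* The matrices possessing a PSD square root (necessarily root2); outside this set msqrt
   is the constant junk value of the definite description. *)
definition has_psd_root :: "qmat set" where
  "has_psd_root = {A. psd (root2 A) \<and> root2 A ** root2 A = A}"

lemma has_psd_root_sets: "has_psd_root \<in> sets borel"
proof -
  have "(\<lambda>A. root2 A ** root2 A - A) \<in> borel_measurable borel"
    using borel_measurable_continuous_Pair[OF root2_measurable measurable_id, of "\<lambda>X A. X ** X - A"]
    unfolding matrix_matrix_mult_def by (simp add: case_prod_beta continuous_on_diff
        continuous_on_fst continuous_on_snd continuous_intros)
  then have square: "(\<lambda>A. root2 A ** root2 A - A) -` {0} \<inter> space borel \<in> sets borel"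
    by (rule measurable_sets) simp
  have psd: "root2 -` {A. psd A} \<inter> space borel \<in> sets borel"
    by (rule measurable_sets[OF root2_measurable]) (simp add: psd_closed)
  have "has_psd_root = (root2 -` {A. psd A} \<inter> space borel)
      \<inter> ((\<lambda>A. root2 A ** root2 A - A) -` {0} \<inter> space borel)"
    by (auto simp: has_psd_root_def)
  with sets.Int[OF psd square] show ?thesis by simp
qed

lemma msqrt_cases: "msqrt A = (if A \<in> has_psd_root then root2 A else The (\<lambda>X. False))"
proof (cases "A \<in> has_psd_root")
  case True
  then show ?thesis by (simp add: has_psd_root_def msqrt_eqI)
next
  case False
  then have "(\<lambda>X. psd X \<and> X ** X = A) = (\<lambda>X. False)"
    using psd_root_unique unfolding has_psd_root_def by fastforce
  with False show ?thesis by (simp add: msqrt_def)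
qed

lemma msqrt_measurable [measurable]: "msqrt \<in> borel_measurable borel"
  unfolding msqrt_cases[abs_def] by (rule measurable_If_set) (auto simp: has_psd_root_sets)

lemma fidelity_dephase_measurable [measurable]:
  "(\<lambda>\<rho>. fidelity \<rho> (dephase b \<rho>)) \<in> borel_measurable borel"
proof -
  have "continuous_on UNIV (\<lambda>x::qmat \<times> qmat. fst x ** dephase b (snd x) ** fst x)"
    unfolding matrix_matrix_mult_def dephase_def braket_def matrix_vector_mult_def proj_def
    by (intro continuous_intros)
  then have [measurable]: "(\<lambda>\<rho>. msqrt \<rho> ** dephase b \<rho> ** msqrt \<rho>) \<in> borel_measurable borel"
    using borel_measurable_continuous_Pair[OF msqrt_measurable measurable_id,
        of "\<lambda>X \<rho>. X ** dephase b \<rho> ** X"]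
    by (simp add: case_prod_beta)
  have [measurable]: "(\<lambda>A. (Re (mtrace A))^2) \<in> borel_measurable borel"
    unfolding mtrace_def by (intro borel_measurable_continuous_onI continuous_intros)
  show ?thesis unfolding fidelity_def by measurable
qed

definition normalized :: "qvec \<Rightarrow> bool" where
  "normalized \<psi> \<longleftrightarrow> \<psi>$1 * cnj (\<psi>$1) + \<psi>$2 * cnj (\<psi>$2) = 1"

definition amp :: "qvec \<Rightarrow> qvec \<Rightarrow> complex" where
  "amp u \<psi> = cnj (u$1) * \<psi>$1 + cnj (u$2) * \<psi>$2"

definition outcome_prob :: "(2 \<Rightarrow> qvec) \<Rightarrow> 2 \<Rightarrow> qvec \<Rightarrow> real" where
  "outcome_prob b j \<psi> = (cmod (amp (b j) \<psi>))^2"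

lemma amp_times_cnj: "amp u \<psi> * cnj (amp u \<psi>) = of_real ((cmod (amp u \<psi>))^2)"
  by (rule complex_norm_square[symmetric])

lemma psd_scaled_proj:
  assumes "c \<ge> 0"
  shows "psd (c *\<^sub>R proj \<psi>)"
proof -
  have "(\<Sum>i\<in>UNIV. cnj (v$i) * ((c *\<^sub>R proj \<psi>) *v v)$i) = of_real (c * (cmod (amp v \<psi>))^2)" for v
    unfolding of_real_mult amp_times_cnj[symmetric]
    by (simp add: sum_2 matrix_vector_mult_def proj_def amp_def complex_scaleR algebra_simps)
  with assms show ?thesis unfolding psd_def Let_def by simp
qed

lemma scaled_proj_square:
  assumes "normalized \<psi>"
  shows "(c *\<^sub>R proj \<psi>) ** (c *\<^sub>R proj \<psi>) = (c^2) *\<^sub>R proj \<psi>"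
proof -
  have "((c *\<^sub>R proj \<psi>) ** (c *\<^sub>R proj \<psi>)) $ i $ j
      = of_real (c^2) * (\<psi>$i * cnj (\<psi>$j) * (\<psi>$1 * cnj (\<psi>$1) + \<psi>$2 * cnj (\<psi>$2)))" for i j
    by (simp add: mat_mult_2_nth proj_def complex_scaleR power2_eq_square algebra_simps)
  with assms show ?thesis by (simp add: vec_eq_iff proj_def complex_scaleR normalized_def)
qed

lemma msqrt_scaled_proj:
  assumes "normalized \<psi>" "c \<ge> 0"
  shows "msqrt ((c^2) *\<^sub>R proj \<psi>) = c *\<^sub>R proj \<psi>"
  using assms by (intro msqrt_eqI psd_scaled_proj scaled_proj_square)

lemma mtrace_scaled_proj:
  assumes "normalized \<psi>"
  shows "mtrace (c *\<^sub>R proj \<psi>) = of_real c"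
proof -
  have "mtrace (c *\<^sub>R proj \<psi>) = of_real c * (\<psi>$1 * cnj (\<psi>$1) + \<psi>$2 * cnj (\<psi>$2))"
    by (simp add: mtrace_def sum_2 proj_def complex_scaleR algebra_simps)
  with assms show ?thesis by (simp add: normalized_def)
qed

lemma proj_sandwich:
  assumes "braket \<psi> M \<psi> = of_real r"
  shows "proj \<psi> ** M ** proj \<psi> = r *\<^sub>R proj \<psi>"
proof -
  have "(proj \<psi> ** M ** proj \<psi>) $ i $ j = braket \<psi> M \<psi> * proj \<psi> $ i $ j" for i j
    by (simp add: mat_mult_2_nth braket_def sum_2 matrix_vector_mult_def proj_def algebra_simps)
  with assms show ?thesis by (simp add: vec_eq_iff complex_scaleR)
qed

lemma braket_dephase_proj:
  "braket \<psi> (dephase b (proj \<psi>)) \<psi> = of_real ((outcome_prob b 1 \<psi>)^2 + (outcome_prob b 2 \<psi>)^2)"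
proof -
  have "braket \<psi> (dephase b (proj \<psi>)) \<psi>
      = (\<Sum>j\<in>UNIV. braket (b j) (proj \<psi>) (b j) * braket \<psi> (proj (b j)) \<psi>)"
    unfolding dephase_def braket_def matrix_vector_mult_def proj_def
    by (simp add: sum_2) (simp add: algebra_simps)
  also have "\<dots> = (\<Sum>j\<in>UNIV. amp (b j) \<psi> * cnj (amp (b j) \<psi>) * (amp (b j) \<psi> * cnj (amp (b j) \<psi>)))"
    by (simp add: braket_def sum_2 matrix_vector_mult_def proj_def amp_def algebra_simps)
  also have "\<dots> = (\<Sum>j\<in>UNIV. of_real ((outcome_prob b j \<psi>)^2))"
    by (simp add: amp_times_cnj outcome_prob_def power2_eq_square)
  finally show ?thesis by (simp add: sum_2)
qed

(* Fidelity of a pure state with its dephasing: F = p_1^2 + p_2^2.  Both square roots in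
   the fidelity are square roots of multiples of the same rank-one projector. *)
lemma fidelity_pure_dephase:
  assumes "normalized \<psi>"
  shows "fidelity (proj \<psi>) (dephase b (proj \<psi>)) = (outcome_prob b 1 \<psi>)^2 + (outcome_prob b 2 \<psi>)^2"
proof -
  define r where "r = (outcome_prob b 1 \<psi>)^2 + (outcome_prob b 2 \<psi>)^2"
  have "r \<ge> 0" by (simp add: r_def)
  have root_proj: "msqrt (proj \<psi>) = proj \<psi>"
    using msqrt_scaled_proj[OF assms, of 1] by simp
  have sandwich: "proj \<psi> ** dephase b (proj \<psi>) ** proj \<psi> = ((sqrt r)^2) *\<^sub>R proj \<psi>"
    using proj_sandwich[OF braket_dephase_proj[of \<psi> b, folded r_def]] \<open>r \<ge> 0\<close> by simp
  have "msqrt (proj \<psi> ** dephase b (proj \<psi>) ** proj \<psi>) = sqrt r *\<^sub>R proj \<psi>"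
    unfolding sandwich using \<open>r \<ge> 0\<close> by (intro msqrt_scaled_proj[OF assms]) simp
  then show ?thesis
    using \<open>r \<ge> 0\<close> by (simp add: fidelity_def root_proj mtrace_scaled_proj[OF assms] r_def)
qed

(* An orthonormal basis of C^2 is complete (its matrix is unitary from both sides),
   which gives p_1 + p_2 = 1. *)
lemma onb_completeness:
  assumes "onb b"
  shows "(\<Sum>j\<in>UNIV. cnj (b j $ i) * b j $ k) = (if i = k then 1 else 0)"
proof -
  define U :: qmat where "U = (\<chi> j i. cnj (b j $ i))"
  define V :: qmat where "V = (\<chi> i j. b j $ i)"
  have "U ** V = mat 1"
    using assms by (simp add: vec_eq_iff matrix_matrix_mult_def mat_def U_def V_def onb_def)
  then have "V ** U = mat 1" by (simp add: matrix_left_right_inverse)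
  then have "cnj ((V ** U) $ i $ k) = (if i = k then 1 else 0)" by (simp add: mat_def)
  then show ?thesis by (simp add: matrix_matrix_mult_def U_def V_def)
qed

lemma outcome_prob_sum:
  assumes b: "onb b" and \<psi>: "normalized \<psi>"
  shows "outcome_prob b 1 \<psi> + outcome_prob b 2 \<psi> = 1"
proof -
  define E where "E i k = (\<Sum>j\<in>UNIV. cnj (b j $ i) * b j $ k)" for i k
  have "amp (b 1) \<psi> * cnj (amp (b 1) \<psi>) + amp (b 2) \<psi> * cnj (amp (b 2) \<psi>)
     = \<psi>$1 * cnj (\<psi>$1) * E 1 1 + \<psi>$1 * cnj (\<psi>$2) * E 1 2
       + \<psi>$2 * cnj (\<psi>$1) * E 2 1 + \<psi>$2 * cnj (\<psi>$2) * E 2 2"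
    by (simp add: E_def sum_2 amp_def algebra_simps)
  also have "\<dots> = 1"
    using \<psi> onb_completeness[OF b] by (simp add: E_def normalized_def)
  finally have "of_real (outcome_prob b 1 \<psi> + outcome_prob b 2 \<psi>) = (1::complex)"
    by (simp add: amp_times_cnj outcome_prob_def)
  then show ?thesis by (simp only: of_real_eq_1_iff)
qed

definition trig_poly2 :: "real \<Rightarrow> (real \<Rightarrow> real) \<Rightarrow> bool" where
  "trig_poly2 c0 f \<longleftrightarrow> (\<exists>a1 b1 a2 b2. \<forall>\<phi>.
     f \<phi> = c0 + a1 * cos \<phi> + b1 * sin \<phi> + a2 * cos (2 * \<phi>) + b2 * sin (2 * \<phi>))"

(* Averaging a nonnegative such f over a uniformly distributed phase yields c0:
   the harmonics integrate to zero over a full period (fundamental theorem of calculus). *)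
lemma trig_poly2_mean:
  assumes f: "trig_poly2 c0 f" and nonneg: "\<And>\<phi>. f \<phi> \<ge> 0"
  shows "(\<integral>\<^sup>+\<phi>. ennreal (f \<phi>) \<partial>uniform_measure lborel {0..<2*pi}) = ennreal c0"
proof -
  obtain a1 b1 a2 b2 where f_eq:
    "\<And>\<phi>. f \<phi> = c0 + a1 * cos \<phi> + b1 * sin \<phi> + a2 * cos (2 * \<phi>) + b2 * sin (2 * \<phi>)"
    using f unfolding trig_poly2_def by blast
  define F where "F \<phi> = c0 * \<phi> + a1 * sin \<phi> - b1 * cos \<phi> + a2 * sin (2 * \<phi>) / 2 - b2 * cos (2 * \<phi>) / 2"
    for \<phi>
  have [measurable]: "f \<in> borel_measurable borel"
    unfolding f_eq[abs_def] by (intro borel_measurable_continuous_onI continuous_intros)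
  have F_deriv: "DERIV F \<phi> :> f \<phi>" for \<phi>
    unfolding F_def f_eq by (auto intro!: derivative_eq_intros simp: algebra_simps)
  have "(\<integral>\<^sup>+\<phi>. ennreal (f \<phi>) \<partial>uniform_measure lborel {0..<2*pi})
      = (\<integral>\<^sup>+\<phi>. ennreal (f \<phi>) * indicator {0..<2*pi} \<phi> \<partial>lborel) / emeasure lborel {0..<2*pi}"
    by (rule nn_integral_uniform_measure) auto
  also have "(\<integral>\<^sup>+\<phi>. ennreal (f \<phi>) * indicator {0..<2*pi} \<phi> \<partial>lborel)
      = (\<integral>\<^sup>+\<phi>. ennreal (f \<phi>) * indicator {0..2*pi} \<phi> \<partial>lborel)"
    by (rule nn_integral_cong_AE)
       (use AE_lborel_singleton[of "2*pi"] in \<open>auto elim!: eventually_mono split: split_indicator\<close>)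
  also have "\<dots> = F (2*pi) - F 0"
    by (rule nn_integral_FTC_Icc) (auto simp: F_deriv nonneg)
  also have "F (2*pi) - F 0 = c0 * (2*pi)"
    unfolding F_def by (simp add: sin_double cos_double)
  finally have "(\<integral>\<^sup>+\<phi>. ennreal (f \<phi>) \<partial>uniform_measure lborel {0..<2*pi})
      = ennreal (c0 * (2*pi)) / ennreal (2*pi)" by simp
  moreover have "c0 \<ge> 0"
    using nonneg[of 0] nonneg[of pi] nonneg[of "pi/2"] nonneg[of "-pi/2"] by (simp add: f_eq)
  ultimately show ?thesis by (simp add: divide_ennreal)
qed

(* In the two-element index type 0 = 2, so the cosine amplitude is the second component. *)
lemma psi_nth:
  "psi \<theta> s \<phi> $ 1 = of_real (s * sin (\<theta>/2)) * cis \<phi>"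
  "psi \<theta> s \<phi> $ 2 = of_real (cos (\<theta>/2))"
  by (simp_all add: psi_def)

lemma psi_normalized:
  assumes "s^2 = 1"
  shows "normalized (psi \<theta> s \<phi>)"
proof -
  have "psi \<theta> s \<phi> $ 1 * cnj (psi \<theta> s \<phi> $ 1) + psi \<theta> s \<phi> $ 2 * cnj (psi \<theta> s \<phi> $ 2)
      = of_real ((s * sin (\<theta>/2))^2 + (cos (\<theta>/2))^2)"
    unfolding of_real_add complex_norm_square[symmetric]
    by (simp add: psi_nth norm_mult power_mult_distrib)
  also have "(s * sin (\<theta>/2))^2 + (cos (\<theta>/2))^2 = 1"
    using assms by (simp add: power_mult_distrib)
  finally show ?thesis by (simp add: normalized_def)
qed

lemma amp_psi_sq:
  assumes s: "s^2 = 1"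
  shows "(cmod (amp u (psi \<theta> s \<phi>)))^2 =
     (cmod (u$2))^2 * (cos (\<theta>/2))^2 + (cmod (u$1))^2 * (sin (\<theta>/2))^2
     + 2 * cos (\<theta>/2) * sin (\<theta>/2) * s * ((Re (u$2) * Re (u$1) + Im (u$2) * Im (u$1)) * cos \<phi>
                                          - (Im (u$2) * Re (u$1) - Re (u$2) * Im (u$1)) * sin \<phi>)"
proof -
  define a1 a2 b1 b2 where "a1 = Re (u$2)" and "a2 = Im (u$2)" and "b1 = Re (u$1)" and "b2 = Im (u$1)"
  define c d co si where "c = cos (\<theta>/2)" and "d = sin (\<theta>/2)" and "co = cos \<phi>" and "si = sin \<phi>"
  have "Re (amp u (psi \<theta> s \<phi>)) = b1 * s * d * co + b2 * s * d * si + a1 * c"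
    and "Im (amp u (psi \<theta> s \<phi>)) = b1 * s * d * si - b2 * s * d * co - a2 * c"
    by (simp_all add: amp_def psi_nth a1_def a2_def b1_def b2_def c_def d_def co_def si_def
        cis.code algebra_simps)
  then have "(cmod (amp u (psi \<theta> s \<phi>)))^2
      = (b1 * s * d * co + b2 * s * d * si + a1 * c)^2 + (b1 * s * d * si - b2 * s * d * co - a2 * c)^2"
    by (simp add: cmod_power2)
  also have "\<dots> = (a1^2 + a2^2) * c^2 + (b1^2 + b2^2) * d^2 * s^2 * (co^2 + si^2)
     + 2 * c * d * s * ((a1 * b1 + a2 * b2) * co - (a2 * b1 - a1 * b2) * si)"
    by (simp add: power2_eq_square algebra_simps)
  finally show ?thesis
    using s by (simp add: a1_def a2_def b1_def b2_def c_def d_def co_def si_def cmod_power2)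
qed

lemma square_sum_trig_poly2:
  fixes K S s u v :: real
  assumes s: "s^2 = 1"
  defines "P \<equiv> \<lambda>\<phi>. K + S * s * (u * cos \<phi> - v * sin \<phi>)"
  shows "trig_poly2 (1 - 2*K + 2*K^2 + S^2 * (u^2 + v^2)) (\<lambda>\<phi>. (P \<phi>)^2 + (1 - P \<phi>)^2)"
  unfolding trig_poly2_def
proof (intro exI allI)
  fix \<phi> :: real
  define co si where "co = cos \<phi>" and "si = sin \<phi>"
  define L where "L = S * s * (u * co - v * si)"
  have L2: "2 * L^2 = S^2 * (u^2 + v^2) + S^2 * (u^2 - v^2) * cos (2 * \<phi>) - 2 * S^2 * u * v * sin (2 * \<phi>)"
  proof -
    have "2 * L^2 = S^2 * (2 * (u * co - v * si)^2)"
      using s by (simp add: L_def power_mult_distrib)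
    also have "2 * (u * co - v * si)^2
        = (u^2 + v^2) * (co^2 + si^2) + (u^2 - v^2) * (co^2 - si^2) - 2 * u * v * (2 * si * co)"
      by (simp add: power2_eq_square algebra_simps)
    also have "co^2 + si^2 = 1" by (simp add: co_def si_def)
    also have "co^2 - si^2 = cos (2 * \<phi>)" by (simp add: co_def si_def cos_double)
    also have "2 * si * co = sin (2 * \<phi>)" by (simp add: co_def si_def sin_double)
    finally show ?thesis by (simp add: algebra_simps)
  qed
  have "(P \<phi>)^2 + (1 - P \<phi>)^2 = 1 - 2*K + 2*K^2 + (4*K - 2) * L + 2 * L^2"
    by (simp add: P_def L_def co_def si_def power2_eq_square algebra_simps)
  also note L2
  finally show "(P \<phi>)^2 + (1 - P \<phi>)^2 = 1 - 2*K + 2*K^2 + S^2 * (u^2 + v^2)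
      + ((4*K - 2) * S * s * u) * cos \<phi> + (- (4*K - 2) * S * s * v) * sin \<phi>
      + (S^2 * (u^2 - v^2)) * cos (2 * \<phi>) + (- 2 * S^2 * u * v) * sin (2 * \<phi>)"
    by (simp add: L_def co_def si_def algebra_simps)
qed

(* The phase-averaged fidelity, as a function of x = |b_1 $ 2|^2 and y = |b_1 $ 1|^2,
   the squared moduli of the components of the first basis vector. *)
definition avg_fid :: "real \<Rightarrow> real \<Rightarrow> real \<Rightarrow> real" where
  "avg_fid \<theta> x y = 1/2 + (x - y)^2 * (cos \<theta>)^2 / 2 + (sin \<theta>)^2 * x * y"

definition comp_sq :: "(2 \<Rightarrow> qvec) \<Rightarrow> 2 \<Rightarrow> real" where
  "comp_sq b i = (cmod (b 1 $ i))^2"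

lemma comp_sq_sum:
  assumes "onb b"
  shows "comp_sq b 1 + comp_sq b 2 = 1"
proof -
  have "b 1 $ 1 * cnj (b 1 $ 1) + b 1 $ 2 * cnj (b 1 $ 2) = 1"
    using assms by (simp add: onb_def sum_2 mult.commute)
  then have "of_real (comp_sq b 1 + comp_sq b 2) = (1::complex)"
    by (simp only: comp_sq_def of_real_add complex_norm_square)
  then show ?thesis by (simp only: of_real_eq_1_iff)
qed

lemma fidelity_psi_trig_poly2:
  assumes b: "onb b" and s: "s^2 = 1"
  shows "trig_poly2 (avg_fid \<theta> (comp_sq b 2) (comp_sq b 1))
           (\<lambda>\<phi>. fidelity (proj (psi \<theta> s \<phi>)) (dephase b (proj (psi \<theta> s \<phi>))))"
proof -
  define x y where "x = comp_sq b 2" and "y = comp_sq b 1"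
  define c d where "c = cos (\<theta>/2)" and "d = sin (\<theta>/2)"
  define u v where "u = Re (b 1 $ 2) * Re (b 1 $ 1) + Im (b 1 $ 2) * Im (b 1 $ 1)"
    and "v = Im (b 1 $ 2) * Re (b 1 $ 1) - Re (b 1 $ 2) * Im (b 1 $ 1)"
  define K where "K = x * c^2 + y * d^2"
  have xy: "x + y = 1" using comp_sq_sum[OF b] by (simp add: x_def y_def)
  have cd: "c^2 + d^2 = 1" by (simp add: c_def d_def)
  have uv: "u^2 + v^2 = x * y"
    unfolding u_def v_def x_def y_def comp_sq_def cmod_power2
    by (simp add: power2_eq_square algebra_simps)
  have fid: "fidelity (proj (psi \<theta> s \<phi>)) (dephase b (proj (psi \<theta> s \<phi>)))
      = (K + (2*c*d) * s * (u * cos \<phi> - v * sin \<phi>))^2 + (1 - (K + (2*c*d) * s * (u * cos \<phi> - v * sin \<phi>)))^2"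
    for \<phi>
  proof -
    have P: "outcome_prob b 1 (psi \<theta> s \<phi>) = K + (2*c*d) * s * (u * cos \<phi> - v * sin \<phi>)"
      unfolding outcome_prob_def amp_psi_sq[OF s]
      by (simp add: K_def x_def y_def comp_sq_def c_def d_def u_def v_def algebra_simps)
    have "outcome_prob b 2 (psi \<theta> s \<phi>) = 1 - outcome_prob b 1 (psi \<theta> s \<phi>)"
      using outcome_prob_sum[OF b psi_normalized[OF s, of \<theta> \<phi>]] by simp
    then show ?thesis
      using fidelity_pure_dephase[OF psi_normalized[OF s, of \<theta> \<phi>]] P by simp
  qed
  have "1 - 2*K + 2*K^2 = 1/2 + (x - y)^2 * (c^2 - d^2)^2 / 2"
  proof -
    have y: "y = 1 - x" and d: "d^2 = 1 - c^2" using xy cd by simp_all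
    show ?thesis unfolding K_def y d by (simp add: power2_eq_square field_simps)
  qed
  moreover have "c^2 - d^2 = cos \<theta>" "2 * c * d = sin \<theta>"
    using cos_double[of "\<theta>/2"] sin_double[of "\<theta>/2"] by (simp_all add: c_def d_def)
  ultimately have "1 - 2*K + 2*K^2 + (2*c*d)^2 * (u^2 + v^2) = avg_fid \<theta> x y"
    by (simp add: avg_fid_def uv power_mult_distrib)
  then show ?thesis
    using square_sum_trig_poly2[OF s, of K "2*c*d" u v] unfolding fid x_def y_def by simp
qed

abbreviation sign_distr :: "real measure" where
  "sign_distr \<equiv> measure_pmf (pmf_of_set {1, -1})"

abbreviation phase_distr :: "real measure" where
  "phase_distr \<equiv> uniform_measure lborel {0..<2*pi}"

lemma ens_state_measurable:
  "(\<lambda>(s, \<phi>). proj (psi \<theta> s \<phi>)) \<in> borel_measurable (sign_distr \<Otimes>\<^sub>M phase_distr)"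
proof -
  have fst_meas: "fst \<in> borel_measurable (sign_distr \<Otimes>\<^sub>M phase_distr)"
    by (rule measurable_compose[OF measurable_fst]) simp
  have snd_meas: "snd \<in> borel_measurable (sign_distr \<Otimes>\<^sub>M phase_distr)"
    by (rule measurable_compose[OF measurable_snd]) (simp add: measurable_ident_sets)
  have components: "continuous_on UNIV (\<lambda>x::real \<times> real. psi \<theta> (fst x) (snd x) $ i)" for i
    by (cases "i = 0") (simp_all add: psi_def, (intro continuous_intros)+)
  have "continuous_on UNIV (\<lambda>x::real \<times> real. proj (psi \<theta> (fst x) (snd x)))"
    unfolding proj_def by (intro continuous_intros components)
  from borel_measurable_continuous_Pair[OF fst_meas snd_meas this] show ?thesis
    by (simp add: case_prod_beta)
qed

lemma avg_fid_nonneg: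
  assumes "x \<ge> 0" "y \<ge> 0"
  shows "avg_fid \<theta> x y \<ge> 0"
  using assms by (simp add: avg_fid_def)

(* The expected fidelity over the ensemble, for a fixed basis: Fubini, then the
   phase average of the inner integral does not depend on the sign. *)
lemma integral_fidelity_ens:
  assumes b: "onb b"
  shows "(\<integral>\<rho>. fidelity \<rho> (dephase b \<rho>) \<partial>ens \<theta>) = avg_fid \<theta> (comp_sq b 2) (comp_sq b 1)"
proof -
  interpret phase: prob_space phase_distr
    by (rule prob_space_uniform_measure) auto
  define I where "I = avg_fid \<theta> (comp_sq b 2) (comp_sq b 1)"
  define h where "h = (\<lambda>\<rho>. fidelity \<rho> (dephase b \<rho>))"
  have [measurable]: "h \<in> borel_measurable borel"
    unfolding h_def by measurable
  note state_meas [measurable] = ens_state_measurable[of \<theta>]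
  have phase_average: "(\<integral>\<^sup>+\<phi>. ennreal (h (proj (psi \<theta> s \<phi>))) \<partial>phase_distr) = ennreal I"
    if "s \<in> {1, -1}" for s
    unfolding h_def I_def
    by (rule trig_poly2_mean[OF fidelity_psi_trig_poly2[OF b]]) (use that in \<open>auto simp: fidelity_def\<close>)
  have "(\<integral>\<^sup>+\<rho>. ennreal (h \<rho>) \<partial>ens \<theta>)
      = (\<integral>\<^sup>+x. ennreal (h (case x of (s, \<phi>) \<Rightarrow> proj (psi \<theta> s \<phi>))) \<partial>(sign_distr \<Otimes>\<^sub>M phase_distr))"
    unfolding ens_def by (rule nn_integral_distr) measurable
  also have "\<dots> = (\<integral>\<^sup>+s. \<integral>\<^sup>+\<phi>. ennreal (h (proj (psi \<theta> s \<phi>))) \<partial>phase_distr \<partial>sign_distr)"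
  proof -
    have "(\<lambda>x. ennreal (h (case x of (s, \<phi>) \<Rightarrow> proj (psi \<theta> s \<phi>))))
        \<in> borel_measurable (sign_distr \<Otimes>\<^sub>M phase_distr)" by measurable
    from phase.nn_integral_fst[OF this] show ?thesis by simp
  qed
  also have "\<dots> = (\<integral>\<^sup>+s. ennreal I \<partial>sign_distr)"
    by (rule nn_integral_cong_AE) (auto simp: AE_measure_pmf_iff phase_average)
  also have "\<dots> = ennreal I"
    by (simp add: measure_pmf.emeasure_space_1)
  finally have "has_bochner_integral (ens \<theta>) h I"
  proof (rule has_bochner_integral_nn_integral[rotated 3])
    show "h \<in> borel_measurable (ens \<theta>)" by (simp add: ens_def)
    show "AE \<rho> in ens \<theta>. 0 \<le> h \<rho>" by (simp add: h_def fidelity_def)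
    show "0 \<le> I" unfolding I_def by (intro avg_fid_nonneg) (simp_all add: comp_sq_def)
  qed
  then have "integral\<^sup>L (ens \<theta>) h = I"
    by (rule has_bochner_integral_integral_eq)
  then show ?thesis by (simp add: h_def I_def)
qed

(* With t = 4xy in [0, 1], avg_fid interpolates linearly between the values at the
   computational basis (t = 0) and at the Hadamard basis (t = 1); hence it is bounded by the larger one. *)
lemma avg_fid_interpolation:
  assumes "x + y = 1"
  shows "avg_fid \<theta> x y = (1 - 4*x*y) * (1 - (sin \<theta>)^2 / 2) + 4*x*y * (1/2 + (sin \<theta>)^2 / 4)"
proof -
  have "(x - y)^2 = (x + y)^2 - 4*x*y" by (simp add: power2_eq_square algebra_simps)
  then have diff: "(x - y)^2 = 1 - 4*x*y" using assms by simp
  have cos2: "(cos \<theta>)^2 = 1 - (sin \<theta>)^2" by (simp add: cos_squared_eq)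
  show ?thesis unfolding avg_fid_def diff cos2 by (simp add: field_simps)
qed

lemma avg_fid_le_max:
  assumes "x \<ge> 0" "y \<ge> 0" "x + y = 1"
  shows "avg_fid \<theta> x y \<le> max (1 - (sin \<theta>)^2 / 2) (1/2 + (sin \<theta>)^2 / 4)"
proof -
  let ?M = "max (1 - (sin \<theta>)^2 / 2) (1/2 + (sin \<theta>)^2 / 4)"
  define t where "t = 4*x*y"
  have "0 \<le> t" using assms by (simp add: t_def)
  moreover have "t \<le> 1"
  proof -
    have "0 \<le> (x - y)^2" by simp
    also have "(x - y)^2 = (x + y)^2 - t" by (simp add: t_def power2_eq_square algebra_simps)
    finally show ?thesis using assms by simp
  qed
  moreover have "avg_fid \<theta> x y = (1 - t) * (1 - (sin \<theta>)^2 / 2) + t * (1/2 + (sin \<theta>)^2 / 4)"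
    unfolding t_def by (rule avg_fid_interpolation[OF assms(3)])
  ultimately have "avg_fid \<theta> x y \<le> (1 - t) * ?M + t * ?M"
    by (simp only:) (intro add_mono mult_left_mono, auto)
  then show ?thesis by (simp add: algebra_simps)
qed

definition std_basis :: "2 \<Rightarrow> qvec" where
  "std_basis j = (if j = 1 then vec2 0 1 else vec2 1 0)"

definition hadamard_basis :: "2 \<Rightarrow> qvec" where
  "hadamard_basis j = (let h = complex_of_real (sqrt (1/2)) in if j = 1 then vec2 h h else vec2 h (-h))"

lemma onb_std_basis: "onb std_basis"
  unfolding onb_def by (simp add: forall_2 sum_2 std_basis_def)

lemma onb_hadamard_basis: "onb hadamard_basis"
  unfolding onb_def by (simp add: forall_2 sum_2 hadamard_basis_def Let_def flip: of_real_mult)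

lemma avg_fid_std_basis: "avg_fid \<theta> (comp_sq std_basis 2) (comp_sq std_basis 1) = 1 - (sin \<theta>)^2 / 2"
  by (simp add: avg_fid_def comp_sq_def std_basis_def cos_squared_eq field_simps)

lemma avg_fid_hadamard_basis:
  "avg_fid \<theta> (comp_sq hadamard_basis 2) (comp_sq hadamard_basis 1) = 1/2 + (sin \<theta>)^2 / 4"
  by (simp add: avg_fid_def comp_sq_def hadamard_basis_def Let_def)

lemma ECCC_ens: "ECCC (ens \<theta>) = max (1 - (sin \<theta>)^2 / 2) (1/2 + (sin \<theta>)^2 / 4)"
proof -
  let ?value = "\<lambda>b. avg_fid \<theta> (comp_sq b 2) (comp_sq b 1)"
  have "ECCC (ens \<theta>) = Sup (?value ` {b. onb b})"
    unfolding ECCC_def by (intro arg_cong[where f = Sup] image_cong) (simp_all add: integral_fidelity_ens)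
  also have "\<dots> = max (1 - (sin \<theta>)^2 / 2) (1/2 + (sin \<theta>)^2 / 4)"
  proof (rule cSup_eq_maximum)
    have "1 - (sin \<theta>)^2 / 2 \<in> ?value ` {b. onb b}"
      by (rule rev_image_eqI[of std_basis]) (simp_all add: onb_std_basis avg_fid_std_basis)
    moreover have "1/2 + (sin \<theta>)^2 / 4 \<in> ?value ` {b. onb b}"
      by (rule rev_image_eqI[of hadamard_basis]) (simp_all add: onb_hadamard_basis avg_fid_hadamard_basis)
    ultimately show "max (1 - (sin \<theta>)^2 / 2) (1/2 + (sin \<theta>)^2 / 4) \<in> ?value ` {b. onb b}"
      by (simp add: max_def)
  next
    fix z assume "z \<in> ?value ` {b. onb b}"
    then obtain b where "onb b" and z: "z = ?value b" by auto
    show "z \<le> max (1 - (sin \<theta>)^2 / 2) (1/2 + (sin \<theta>)^2 / 4)"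
      unfolding z using comp_sq_sum[OF \<open>onb b\<close>]
      by (intro avg_fid_le_max) (simp_all add: comp_sq_def)
  qed
  finally show ?thesis .
qed

(* The case distinction of the theorem is the comparison of the two values:
   1 - s/2 <= 1/2 + s/4 iff s >= 2/3, for s = sin^2 theta. *)
theorem mainTheorem7:
  shows "(\<forall>\<theta>\<in>{0..pi}. ECCC (ens \<theta>) =
            (if sin \<theta> \<le> sqrt (2/3) then 1 - (sin \<theta>)^2 / 2 else 1/2 + (sin \<theta>)^2 / 4))
       \<and> (\<forall>\<theta>\<in>{0..pi}. ECCC (ens \<theta>) \<ge> 2/3)
       \<and> (\<forall>\<theta>\<in>{0..pi}. sin \<theta> = sqrt (2/3) \<longrightarrow> ECCC (ens \<theta>) = 2/3)
       \<and> ECCC (ens (pi/2)) = 3/4"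
proof (intro conjI ballI impI)
  fix \<theta> :: real assume "\<theta> \<in> {0..pi}"
  then have "sin \<theta> \<ge> 0" by (simp add: sin_ge_zero)
  then have "sin \<theta> \<le> sqrt (2/3) \<longleftrightarrow> sqrt ((sin \<theta>)^2) \<le> sqrt (2/3)" by simp
  also have "\<dots> \<longleftrightarrow> (sin \<theta>)^2 \<le> 2/3" by (rule real_sqrt_le_iff)
  finally show "ECCC (ens \<theta>) =
      (if sin \<theta> \<le> sqrt (2/3) then 1 - (sin \<theta>)^2 / 2 else 1/2 + (sin \<theta>)^2 / 4)"
    by (simp add: ECCC_ens max_def)
next
  fix \<theta> :: real
  show "ECCC (ens \<theta>) \<ge> 2/3" by (simp add: ECCC_ens max_def)
next
  fix \<theta> :: real assume "sin \<theta> = sqrt (2/3)"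
  then show "ECCC (ens \<theta>) = 2/3" by (simp add: ECCC_ens max_def)
next
  show "ECCC (ens (pi/2)) = 3/4" by (simp add: ECCC_ens max_def)
qed

end
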